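(* Let $(E,\mu)$ and $(F,\nu)$ be fuzzy Riesz spaces and $T:E\rightarrow F$ a fuzzy Riesz homomorphism. (1) If $B$ is a fuzzy ideal in $T(E)$, then $T^{-1}(B)$ is a fuzzy ideal in $E$. (2) If $B_1$ is a fuzzy ideal in $F$, then $T^{-1}(B_1)$ is a fuzzy ideal in $E$.
   Context: A fuzzy order on a real vector space $E$ is a map $\mu:E\times E\to[0,1]$ with $\mu(x,x)=1$; $\mu(x,y)+\mu(y,x)>1$ implies $x=y$; and $\mu(x,z)\ge\sup_{y}\min(\mu(x,y),\mu(y,z))$. Write $x\le y$ for $\mu(x,y)>\frac12$; suprema/infima are taken with respect to this relation. $(E,\mu)$ is a fuzzy ordered linear space if $\mu(x_1,x_2)>\frac12$ implies $\mu(x_1,x_2)\le\mu(x_1+x,x_2+x)$ for all $x$ and $\mu(x_1,x_2)\le\mu(\alpha x_1,\alpha x_2)$ for all $\alpha>0$; it is a fuzzy Riesz space if $x\vee y=\sup\{x,y\}$ and $x\wedge y=\inf\{x,y\}$ exist for all $x,y$. $|x|=x\vee(-x)$. A fuzzy Riesz homomorphism is a linear map with $T(x\vee y)=Tx\vee Ty$; $T(E)$ is a fuzzy Riesz subspace of $F$ with the restricted fuzzy order. A subset $A$ is fuzzy solid if $\mu(|x|,|y|)>\frac12$ and $y\in A$ imply $x\in A$; a fuzzy ideal is a fuzzy solid vector subspace. $T^{-1}(B)=\{x\in E: Tx\in B\}$. *)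

theory Defs
  imports "HOL-Analysis.Analysis"
begin

text \<open>Fuzzy orders, relativised to a carrier set S (S = UNIV for the whole space,
  S = range T for the fuzzy Riesz subspace T(E) with the restricted fuzzy order).\<close>

definition fle :: "('a \<Rightarrow> 'a \<Rightarrow> real) \<Rightarrow> 'a \<Rightarrow> 'a \<Rightarrow> bool" where
  "fle \<mu> x y \<longleftrightarrow> \<mu> x y > 1/2"

definition fuzzy_order_on :: "'a set \<Rightarrow> ('a \<Rightarrow> 'a \<Rightarrow> real) \<Rightarrow> bool" where
  "fuzzy_order_on S \<mu> \<longleftrightarrow>
     (\<forall>x\<in>S. \<forall>y\<in>S. 0 \<le> \<mu> x y \<and> \<mu> x y \<le> 1) \<and>
     (\<forall>x\<in>S. \<mu> x x = 1) \<and>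
     (\<forall>x\<in>S. \<forall>y\<in>S. \<mu> x y + \<mu> y x > 1 \<longrightarrow> x = y) \<and>
     (\<forall>x\<in>S. \<forall>z\<in>S. \<mu> x z \<ge> (SUP y\<in>S. min (\<mu> x y) (\<mu> y z)))"

definition is_fub :: "'a set \<Rightarrow> ('a \<Rightarrow> 'a \<Rightarrow> real) \<Rightarrow> 'a set \<Rightarrow> 'a \<Rightarrow> bool" where
  "is_fub S \<mu> A u \<longleftrightarrow> u \<in> S \<and> (\<forall>a\<in>A. fle \<mu> a u)"

definition is_flb :: "'a set \<Rightarrow> ('a \<Rightarrow> 'a \<Rightarrow> real) \<Rightarrow> 'a set \<Rightarrow> 'a \<Rightarrow> bool" where
  "is_flb S \<mu> A u \<longleftrightarrow> u \<in> S \<and> (\<forall>a\<in>A. fle \<mu> u a)"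

definition is_fsup :: "'a set \<Rightarrow> ('a \<Rightarrow> 'a \<Rightarrow> real) \<Rightarrow> 'a set \<Rightarrow> 'a \<Rightarrow> bool" where
  "is_fsup S \<mu> A s \<longleftrightarrow> is_fub S \<mu> A s \<and> (\<forall>u. is_fub S \<mu> A u \<longrightarrow> fle \<mu> s u)"

definition is_finf :: "'a set \<Rightarrow> ('a \<Rightarrow> 'a \<Rightarrow> real) \<Rightarrow> 'a set \<Rightarrow> 'a \<Rightarrow> bool" where
  "is_finf S \<mu> A s \<longleftrightarrow> is_flb S \<mu> A s \<and> (\<forall>u. is_flb S \<mu> A u \<longrightarrow> fle \<mu> u s)"

definition fsup :: "'a set \<Rightarrow> ('a \<Rightarrow> 'a \<Rightarrow> real) \<Rightarrow> 'a \<Rightarrow> 'a \<Rightarrow> 'a" where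
  "fsup S \<mu> x y = (THE s. is_fsup S \<mu> {x, y} s)"

definition fabs :: "'a set \<Rightarrow> ('a \<Rightarrow> 'a \<Rightarrow> real) \<Rightarrow> 'a::real_vector \<Rightarrow> 'a" where
  "fabs S \<mu> x = fsup S \<mu> x (- x)"

definition fuzzy_ordered_linear_space :: "'a::real_vector set \<Rightarrow> ('a \<Rightarrow> 'a \<Rightarrow> real) \<Rightarrow> bool" where
  "fuzzy_ordered_linear_space S \<mu> \<longleftrightarrow> subspace S \<and> fuzzy_order_on S \<mu> \<and>
     (\<forall>x1\<in>S. \<forall>x2\<in>S. \<mu> x1 x2 > 1/2 \<longrightarrow>
        (\<forall>x\<in>S. \<mu> x1 x2 \<le> \<mu> (x1 + x) (x2 + x)) \<and>
        (\<forall>\<alpha>::real. \<alpha> > 0 \<longrightarrow> \<mu> x1 x2 \<le> \<mu> (\<alpha> *\<^sub>R x1) (\<alpha> *\<^sub>R x2)))"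

definition fuzzy_riesz_space :: "'a::real_vector set \<Rightarrow> ('a \<Rightarrow> 'a \<Rightarrow> real) \<Rightarrow> bool" where
  "fuzzy_riesz_space S \<mu> \<longleftrightarrow> fuzzy_ordered_linear_space S \<mu> \<and>
     (\<forall>x\<in>S. \<forall>y\<in>S. (\<exists>s. is_fsup S \<mu> {x, y} s) \<and> (\<exists>i. is_finf S \<mu> {x, y} i))"

definition fuzzy_riesz_hom ::
  "('a::real_vector \<Rightarrow> 'a \<Rightarrow> real) \<Rightarrow> ('b::real_vector \<Rightarrow> 'b \<Rightarrow> real) \<Rightarrow> ('a \<Rightarrow> 'b) \<Rightarrow> bool" where
  "fuzzy_riesz_hom \<mu> \<nu> T \<longleftrightarrow> linear T \<and>
     (\<forall>x y. T (fsup UNIV \<mu> x y) = fsup UNIV \<nu> (T x) (T y))"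

definition fuzzy_solid :: "'a::real_vector set \<Rightarrow> ('a \<Rightarrow> 'a \<Rightarrow> real) \<Rightarrow> 'a set \<Rightarrow> bool" where
  "fuzzy_solid S \<mu> A \<longleftrightarrow> A \<subseteq> S \<and>
     (\<forall>x\<in>S. \<forall>y\<in>A. \<mu> (fabs S \<mu> x) (fabs S \<mu> y) > 1/2 \<longrightarrow> x \<in> A)"

definition fuzzy_ideal :: "'a::real_vector set \<Rightarrow> ('a \<Rightarrow> 'a \<Rightarrow> real) \<Rightarrow> 'a set \<Rightarrow> bool" where
  "fuzzy_ideal S \<mu> A \<longleftrightarrow> subspace A \<and> fuzzy_solid S \<mu> A"

end

theory Submission
  imports Defs
begin

text \<open>Since T is linear and preserves binary suprema, it maps the supremum
  \<open>|x| = x \<or> -x\<close> to the supremum of Tx and -Tx, which is \<open>|Tx|\<close> both in F and in T(E).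
  It is also monotone, because \<open>x \<le> y\<close> exactly when \<open>x \<or> y = y\<close>. Hence \<open>|x| \<le> |y|\<close>
  implies \<open>|Tx| \<le> |Ty|\<close>, so solidity of B passes to its preimage, and preimages of
  subspaces under linear maps are subspaces.\<close>

lemma fuzzy_order_on_refl: "fuzzy_order_on S \<mu> \<Longrightarrow> x \<in> S \<Longrightarrow> \<mu> x x = 1"
  unfolding fuzzy_order_on_def by simp

lemma fuzzy_order_on_antisym:
  "fuzzy_order_on S \<mu> \<Longrightarrow> x \<in> S \<Longrightarrow> y \<in> S \<Longrightarrow> fle \<mu> x y \<Longrightarrow> fle \<mu> y x \<Longrightarrow> x = y"
  unfolding fuzzy_order_on_def fle_def by (metis field_sum_of_halves add_strict_mono)

lemma is_fsup_unique:
  assumes "fuzzy_order_on U \<mu>" "S \<subseteq> U" "is_fsup S \<mu> A s" "is_fsup S \<mu> A s'"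
  shows "s = s'"
proof (rule fuzzy_order_on_antisym[OF assms(1)])
  show "s \<in> U" "s' \<in> U" "fle \<mu> s s'" "fle \<mu> s' s"
    using assms(2-4) unfolding is_fsup_def is_fub_def by auto
qed

lemma fsup_eqI:
  assumes "fuzzy_order_on U \<mu>" "S \<subseteq> U" "is_fsup S \<mu> {x, y} s"
  shows "fsup S \<mu> x y = s"
  unfolding fsup_def using assms by (blast intro: the_equality is_fsup_unique)

lemma is_fsup_fle:
  assumes "fuzzy_order_on S \<mu>" "b \<in> S" "fle \<mu> a b"
  shows "is_fsup S \<mu> {a, b} b"
  using assms fuzzy_order_on_refl[OF assms(1,2)] unfolding is_fsup_def is_fub_def fle_def by simp

lemma is_fsup_subset:
  "is_fsup S \<mu> A s \<Longrightarrow> S' \<subseteq> S \<Longrightarrow> s \<in> S' \<Longrightarrow> is_fsup S' \<mu> A s"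
  unfolding is_fsup_def is_fub_def by blast

lemma fuzzy_riesz_space_order: "fuzzy_riesz_space S \<mu> \<Longrightarrow> fuzzy_order_on S \<mu>"
  unfolding fuzzy_riesz_space_def fuzzy_ordered_linear_space_def by blast

lemma fuzzy_riesz_hom_linear: "fuzzy_riesz_hom \<mu> \<nu> T \<Longrightarrow> linear T"
  unfolding fuzzy_riesz_hom_def by blast

lemma fuzzy_riesz_hom_is_fsup:
  assumes "fuzzy_riesz_space UNIV \<nu>" "fuzzy_riesz_hom \<mu> \<nu> T"
  shows "is_fsup UNIV \<nu> {T x, T y} (T (fsup UNIV \<mu> x y))"
proof -
  obtain s where s: "is_fsup UNIV \<nu> {T x, T y} s"
    using assms(1) unfolding fuzzy_riesz_space_def by blast
  have "T (fsup UNIV \<mu> x y) = fsup UNIV \<nu> (T x) (T y)"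
    using assms(2) unfolding fuzzy_riesz_hom_def by blast
  also have "\<dots> = s"
    using fsup_eqI[OF fuzzy_riesz_space_order[OF assms(1)] subset_UNIV s] .
  finally show ?thesis using s by simp
qed

lemma fuzzy_riesz_hom_fle:
  assumes "fuzzy_order_on UNIV \<mu>" "fuzzy_riesz_space UNIV \<nu>" "fuzzy_riesz_hom \<mu> \<nu> T"
    and "fle \<mu> a b"
  shows "fle \<nu> (T a) (T b)"
proof -
  have "fsup UNIV \<mu> a b = b"
    using fsup_eqI[OF assms(1) subset_UNIV is_fsup_fle[OF assms(1) UNIV_I assms(4)]] .
  then have "is_fsup UNIV \<nu> {T a, T b} (T b)"
    using fuzzy_riesz_hom_is_fsup[OF assms(2,3), of a b] by simp
  then show ?thesis unfolding is_fsup_def is_fub_def by simp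
qed

lemma fuzzy_riesz_hom_fabs:
  assumes "fuzzy_riesz_space UNIV \<nu>" "fuzzy_riesz_hom \<mu> \<nu> T" "range T \<subseteq> S"
  shows "fabs S \<nu> (T x) = T (fabs UNIV \<mu> x)"
proof -
  have "T (- x) = - T x"
    using linear_neg[OF fuzzy_riesz_hom_linear[OF assms(2)]] .
  then have "is_fsup UNIV \<nu> {T x, - T x} (T (fabs UNIV \<mu> x))"
    using fuzzy_riesz_hom_is_fsup[OF assms(1,2), of x "- x"] unfolding fabs_def by simp
  then have "is_fsup S \<nu> {T x, - T x} (T (fabs UNIV \<mu> x))"
    using assms(3) by (blast intro: is_fsup_subset)
  then show ?thesis
    unfolding fabs_def by (rule fsup_eqI[OF fuzzy_riesz_space_order[OF assms(1)] subset_UNIV])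
qed

lemma fuzzy_ideal_vimage:
  assumes "linear T" "range T \<subseteq> S"
    and mono: "\<And>a b. fle \<mu> a b \<Longrightarrow> fle \<nu> (T a) (T b)"
    and fabs_commute: "\<And>x. fabs S \<nu> (T x) = T (fabs UNIV \<mu> x)"
    and "fuzzy_ideal S \<nu> B"
  shows "fuzzy_ideal UNIV \<mu> (T -` B)"
  unfolding fuzzy_ideal_def fuzzy_solid_def
proof (intro conjI ballI impI)
  show "subspace (T -` B)"
    using assms(5) linear_subspace_vimage[OF assms(1)] unfolding fuzzy_ideal_def by blast
next
  fix x y assume "y \<in> T -` B" "\<mu> (fabs UNIV \<mu> x) (fabs UNIV \<mu> y) > 1/2"
  then have "\<nu> (fabs S \<nu> (T x)) (fabs S \<nu> (T y)) > 1/2"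
    using mono fabs_commute unfolding fle_def by simp
  then show "x \<in> T -` B"
    using assms(2,5) \<open>y \<in> T -` B\<close> unfolding fuzzy_ideal_def fuzzy_solid_def by blast
qed simp

lemma fuzzy_riesz_hom_vimage_fuzzy_ideal:
  assumes "fuzzy_riesz_space UNIV \<mu>" "fuzzy_riesz_space UNIV \<nu>" "fuzzy_riesz_hom \<mu> \<nu> T"
    and "range T \<subseteq> S" "fuzzy_ideal S \<nu> B"
  shows "fuzzy_ideal UNIV \<mu> (T -` B)"
  using fuzzy_ideal_vimage[OF fuzzy_riesz_hom_linear[OF assms(3)] assms(4)]
    fuzzy_riesz_hom_fle[OF fuzzy_riesz_space_order[OF assms(1)] assms(2,3)]
    fuzzy_riesz_hom_fabs[OF assms(2,3,4)] assms(5)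
  by blast

theorem theorem2p5:
  fixes \<mu> :: "'a::real_vector \<Rightarrow> 'a \<Rightarrow> real" and \<nu> :: "'b::real_vector \<Rightarrow> 'b \<Rightarrow> real"
    and T :: "'a \<Rightarrow> 'b"
  assumes "fuzzy_riesz_space UNIV \<mu>" and "fuzzy_riesz_space UNIV \<nu>"
    and "fuzzy_riesz_hom \<mu> \<nu> T"
  shows "(\<forall>B. fuzzy_ideal (range T) \<nu> B \<longrightarrow> fuzzy_ideal UNIV \<mu> (T -` B)) \<and>
         (\<forall>B1. fuzzy_ideal UNIV \<nu> B1 \<longrightarrow> fuzzy_ideal UNIV \<mu> (T -` B1))"
  using fuzzy_riesz_hom_vimage_fuzzy_ideal[OF assms] by blast

end
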